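(* Let $K,L,T$ be positive integers and $(\alpha,\beta)\in\mathcal{A}(K,L,T)$. Then $KL+K+L+2T-1-T\min\{K,L,T\}\le\operatorname{N}(\alpha,\beta)$. Consequently, for $\alpha_{\mathrm p}=(0,1,\ldots,K-1)$, $\alpha_{\mathrm s}=(KL)$, $\beta_{\mathrm p}=(0,K,\ldots,K(L-1))$ and $\beta_{\mathrm s}=(KL)$, the degree table $(\alpha_{\mathrm p},\alpha_{\mathrm s},\beta_{\mathrm p},\beta_{\mathrm s})\in\mathcal{A}(K,L,1)$ has the minimum value of $\operatorname{N}$ among all elements of $\mathcal{A}(K,L,1)$.
   Context: A degree table with parameters $K,L,T$ is a tuple $(\alpha_{\mathrm p},\alpha_{\mathrm s},\beta_{\mathrm p},\beta_{\mathrm s})$ of nonnegative integer vectors of lengths $K,T,L,T$ such that, with $\alpha=(\alpha_{\mathrm p}\mid\alpha_{\mathrm s})$, $\beta=(\beta_{\mathrm p}\mid\beta_{\mathrm s})$ (concatenations): (i) entries of $\alpha$ are distinct; (ii) entries of $\beta$ are distinct; (iii) for every integer $n\in\operatorname{Set}(\alpha_{\mathrm p})+\operatorname{Set}(\beta_{\mathrm p})$ there is a unique $i\in\operatorname{Set}(\alpha)$ and a unique $j\in\operatorname{Set}(\beta)$ with $n=i+j$. $\operatorname{Set}(v)$ is the set of entries of $v$, $A+B=\{a+b:a\in A,b\in B\}$, $\mathcal{A}(K,L,T)$ is the set of degree tables, and $\operatorname{N}(\alpha,\beta)=|\operatorname{Set}(\alpha)+\operatorname{Set}(\beta)|$. 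*)

theory Defs
  imports Main
begin

definition sumset :: "nat set \<Rightarrow> nat set \<Rightarrow> nat set" where
  "sumset A B = {a + b | a b. a \<in> A \<and> b \<in> B}"

definition degree_table ::
  "nat \<Rightarrow> nat \<Rightarrow> nat \<Rightarrow> nat list \<Rightarrow> nat list \<Rightarrow> nat list \<Rightarrow> nat list \<Rightarrow> bool" where
  "degree_table K L T ap as bp bs \<longleftrightarrow>
     length ap = K \<and> length as = T \<and> length bp = L \<and> length bs = T \<and>
     distinct (ap @ as) \<and> distinct (bp @ bs) \<and>
     (\<forall>n \<in> sumset (set ap) (set bp).
        \<exists>!ij. ij \<in> set (ap @ as) \<times> set (bp @ bs) \<and> fst ij + snd ij = n)"

definition N_count :: "nat list \<Rightarrow> nat list \<Rightarrow> nat" where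
  "N_count \<alpha> \<beta> = card (sumset (set \<alpha>) (set \<beta>))"

end

theory Submission
  imports Defs
begin

(* Write A = Ap u As, B = Bp u Bs and fix t in Bs. Condition (iii) makes the K L sums
   of Ap + Bp distinct and unrepresentable in any other way in A + B, so Ap + Bp is disjoint
   from As + B, which has at least T + (L + T) - 1 elements, and from the translate Ap + t.
   Few points of Ap + t can lie in As + B: for each s in As at most one lies in s + Bp and
   at most T - 1 in s + Bs (not s + t, as s is not in Ap), so at most min(K, T^2) in total.
   Counting the three disjoint pieces gives N >= K L + K + L + 2 T - 1 - min(K, T^2), the
   same holds with L in place of K, and min(K, L, T^2) <= T min(K, L, T). For T = 1 the
   bound reads N >= K L + K + L, which the table with arithmetic progressions attains. *)

lemma sumset_eq_image: "sumset X Y = (\<lambda>(x, y). x + y) ` (X \<times> Y)"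
  unfolding sumset_def by force

lemma finite_sumset: "finite X \<Longrightarrow> finite Y \<Longrightarrow> finite (sumset X Y)"
  by (simp add: sumset_eq_image)

lemma sumset_commute: "sumset X Y = sumset Y X"
  unfolding sumset_def by (metis add.commute)

text \<open>The translates of X by min Y and of Y by max X lie in X + Y and meet only in
  max X + min Y.\<close>

lemma card_sumset_ge:
  assumes "finite X" "finite Y" "X \<noteq> {}" "Y \<noteq> {}"
  shows "card X + card Y \<le> card (sumset X Y) + 1"
proof -
  have "Min Y \<in> Y" "Max X \<in> X" using assms by simp_all
  define U where "U = (\<lambda>x. x + Min Y) ` X"
  define V where "V = (\<lambda>y. Max X + y) ` Y"
  have "x + Min Y = Max X + Min Y" if "x \<in> X" "y \<in> Y" "x + Min Y = Max X + y" for x y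
  proof -
    have "x \<le> Max X" "Min Y \<le> y" using assms that by simp_all
    then show ?thesis using that(3) by linarith
  qed
  then have "U \<inter> V \<subseteq> {Max X + Min Y}"
    by (auto simp: U_def V_def)
  then have "card (U \<inter> V) \<le> 1"
    using card_mono[of "{Max X + Min Y}"] by simp
  moreover have "U \<union> V \<subseteq> sumset X Y"
    using \<open>Min Y \<in> Y\<close> \<open>Max X \<in> X\<close> by (auto simp: U_def V_def sumset_def)
  then have "card (U \<union> V) \<le> card (sumset X Y)"
    by (intro card_mono finite_sumset assms)
  moreover have "card U + card V = card (U \<union> V) + card (U \<inter> V)"
    using assms by (intro card_Un_Int) (auto simp: U_def V_def)
  moreover have "card U = card X" "card V = card Y"
    by (auto simp: U_def V_def card_image)
  ultimately show ?thesis by linarith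
qed

locale degree_table_sets =
  fixes Ap As Bp Bs :: "nat set"
  assumes finite: "finite Ap" "finite As" "finite Bp" "finite Bs"
    and disjoint: "Ap \<inter> As = {}" "Bp \<inter> Bs = {}"
    and unique_repr: "\<And>a b x y. a \<in> Ap \<Longrightarrow> b \<in> Bp \<Longrightarrow> x \<in> Ap \<union> As \<Longrightarrow> y \<in> Bp \<union> Bs
      \<Longrightarrow> x + y = a + b \<Longrightarrow> x = a \<and> y = b"
begin

lemma swap: "degree_table_sets Bp Bs Ap As"
proof
  fix a b x y
  assume "a \<in> Bp" "b \<in> Ap" "x \<in> Bp \<union> Bs" "y \<in> Ap \<union> As" "x + y = a + b"
  then show "x = a \<and> y = b"
    using unique_repr[of b a y x] by simp
qed (use finite disjoint in auto)

lemma card_sumset_primary: "card (sumset Ap Bp) = card Ap * card Bp"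
proof -
  have "inj_on (\<lambda>(a, b). a + b) (Ap \<times> Bp)"
    by (rule inj_onI) (use unique_repr in auto)
  then show ?thesis
    by (simp add: sumset_eq_image card_image card_cartesian_product)
qed

lemma sumset_primary_disjoint_secondary: "sumset Ap Bp \<inter> sumset As (Bp \<union> Bs) = {}"
proof -
  have False if "a \<in> Ap" "b \<in> Bp" "s \<in> As" "y \<in> Bp \<union> Bs" "a + b = s + y" for a b s y
    using unique_repr[of a b s y] that disjoint(1) by auto
  then show ?thesis unfolding sumset_def by fastforce
qed

lemma sumset_primary_disjoint_translate:
  assumes "t \<in> Bs"
  shows "sumset Ap Bp \<inter> (\<lambda>a. a + t) ` Ap = {}"
proof -
  have False if "a \<in> Ap" "b \<in> Bp" "a' \<in> Ap" "a + b = a' + t" for a b a'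
    using unique_repr[of a b a' t] that disjoint(2) assms by auto
  then show ?thesis unfolding sumset_def by fastforce
qed

lemma card_translates_meet_le_1: "card {a \<in> Ap. \<exists>b\<in>Bp. a + t = s + b} \<le> 1"
proof -
  have "a1 = a2" if "a1 \<in> Ap" "a2 \<in> Ap" "b1 \<in> Bp" "b2 \<in> Bp"
    "a1 + t = s + b1" "a2 + t = s + b2" for a1 a2 b1 b2
    using unique_repr[of a1 b2 a2 b1] that by simp
  then show ?thesis
    using finite(1) by (auto simp: card_le_Suc0_iff_eq)
qed

lemma card_collisions_le:
  assumes "t \<in> Bs"
  shows "card {a \<in> Ap. a + t \<in> sumset As (Bp \<union> Bs)} \<le> card As * card Bs"
    (is "card ?C \<le> _")
proof -
  define M where "M s = {a \<in> Ap. \<exists>b\<in>Bp. a + t = s + b}" for s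
  define D where "D = (\<lambda>(s, y). s + y - t) ` (As \<times> (Bs - {t}))"
  have "?C \<subseteq> (\<Union>s\<in>As. M s) \<union> D"
  proof
    fix a assume "a \<in> ?C"
    then obtain s y where a: "a \<in> Ap" "s \<in> As" "y \<in> Bp \<union> Bs" "a + t = s + y"
      unfolding sumset_def by auto
    show "a \<in> (\<Union>s\<in>As. M s) \<union> D"
    proof (cases "y \<in> Bp")
      case True
      then have "a \<in> M s" using a by (auto simp: M_def)
      then show ?thesis using a(2) by blast
    next
      case False
      have "y \<noteq> t" using a disjoint(1) by auto
      with False a have "(s, y) \<in> As \<times> (Bs - {t})" by simp
      moreover have "a = s + y - t" using a(4) by simp
      ultimately have "a \<in> D" unfolding D_def by (auto intro!: image_eqI[where x = "(s, y)"])
      then show ?thesis by blast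
    qed
  qed
  then have "card ?C \<le> card ((\<Union>s\<in>As. M s) \<union> D)"
    using finite by (intro card_mono) (auto simp: M_def D_def)
  also have "\<dots> \<le> card (\<Union>s\<in>As. M s) + card D"
    by (rule card_Un_le)
  also have "\<dots> \<le> (\<Sum>s\<in>As. card (M s)) + card D"
    using card_UN_le[OF finite(2)] by (rule add_right_mono)
  also have "\<dots> \<le> card As + card As * (card Bs - 1)"
  proof (rule add_mono)
    have "(\<Sum>s\<in>As. card (M s)) \<le> (\<Sum>s\<in>As. 1)"
      unfolding M_def by (intro sum_mono card_translates_meet_le_1)
    then show "(\<Sum>s\<in>As. card (M s)) \<le> card As" by simp
    have "card D \<le> card (As \<times> (Bs - {t}))"
      unfolding D_def by (rule card_image_le) (use finite in simp)
    then show "card D \<le> card As * (card Bs - 1)"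
      using finite(4) assms by (simp add: card_cartesian_product)
  qed
  also have "\<dots> = card As * card Bs"
    using assms finite(4) by (cases "card Bs") auto
  finally show ?thesis .
qed

lemma card_sumset_lower_bound:
  assumes "As \<noteq> {}" "Bs \<noteq> {}"
  shows "card Ap * card Bp + card Ap + card Bp + card As + card Bs
    \<le> card (sumset (Ap \<union> As) (Bp \<union> Bs)) + min (card Ap) (card As * card Bs) + 1"
proof -
  obtain t where t: "t \<in> Bs" using assms(2) by blast
  define P where "P = sumset Ap Bp"
  define Q where "Q = sumset As (Bp \<union> Bs)"
  define C where "C = {a \<in> Ap. a + t \<in> Q}"
  define R where "R = (\<lambda>a. a + t) ` (Ap - C)"
  have finite_PQR: "finite P" "finite Q" "finite R"
    using finite by (simp_all add: P_def Q_def R_def finite_sumset)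
  have disjoint_PQR: "P \<inter> Q = {}" "P \<inter> R = {}" "Q \<inter> R = {}"
    using sumset_primary_disjoint_secondary sumset_primary_disjoint_translate[OF t]
    by (auto simp: P_def Q_def R_def C_def)
  have "P \<union> Q \<union> R \<subseteq> sumset (Ap \<union> As) (Bp \<union> Bs)"
    using t by (auto simp: P_def Q_def R_def sumset_def)
  then have "card (P \<union> Q \<union> R) \<le> card (sumset (Ap \<union> As) (Bp \<union> Bs))"
    using finite by (intro card_mono finite_sumset finite_UnI)
  moreover have "card (P \<union> Q \<union> R) = card P + card Q + card R"
  proof -
    have "card (P \<union> Q \<union> R) = card (P \<union> Q) + card R"
      using finite_PQR disjoint_PQR by (intro card_Un_disjoint) auto
    then show ?thesis
      using finite_PQR disjoint_PQR by (simp add: card_Un_disjoint)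
  qed
  moreover have "card As + card Bp + card Bs \<le> card Q + 1"
    using card_sumset_ge[of As "Bp \<union> Bs"] finite disjoint(2) assms
    by (simp add: Q_def card_Un_disjoint)
  moreover have "card R + card C = card Ap"
    using finite(1) by (simp add: R_def card_image card_Diff_subset C_def card_mono)
  moreover have "card C \<le> min (card Ap) (card As * card Bs)"
    using card_collisions_le[OF t] finite(1) by (simp add: C_def Q_def card_mono)
  ultimately show ?thesis
    using card_sumset_primary unfolding P_def by linarith
qed

end

lemma degree_table_sets_of_degree_table:
  assumes "degree_table K L T ap as bp bs"
  shows "degree_table_sets (set ap) (set as) (set bp) (set bs)"
proof
  have distinct: "distinct (ap @ as)" "distinct (bp @ bs)"
    and unique: "\<forall>n \<in> sumset (set ap) (set bp).
      \<exists>!ij. ij \<in> set (ap @ as) \<times> set (bp @ bs) \<and> fst ij + snd ij = n"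
    using assms unfolding degree_table_def by auto
  show "set ap \<inter> set as = {}" "set bp \<inter> set bs = {}"
    using distinct by auto
  fix a b x y
  assume "a \<in> set ap" "b \<in> set bp" "x \<in> set ap \<union> set as" "y \<in> set bp \<union> set bs"
    and "x + y = a + b"
  moreover from this have "a + b \<in> sumset (set ap) (set bp)"
    unfolding sumset_def by auto
  ultimately have "(x, y) = (a, b)"
    using unique by (metis Un_iff fst_conv mem_Sigma_iff set_append snd_conv)
  then show "x = a \<and> y = b" by simp
qed simp_all

lemma degree_table_card_set:
  assumes "degree_table K L T ap as bp bs"
  shows "card (set ap) = K" "card (set as) = T" "card (set bp) = L" "card (set bs) = T"
  using assms unfolding degree_table_def by (auto simp: distinct_card)

lemma N_count_degree_table_ge:
  assumes dt: "degree_table K L T ap as bp bs" and "T > 0"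
  shows "K * L + K + L + 2 * T \<le> N_count (ap @ as) (bp @ bs) + min (min K L) (T * T) + 1"
proof -
  interpret degree_table_sets "set ap" "set as" "set bp" "set bs"
    using dt by (rule degree_table_sets_of_degree_table)
  interpret swapped: degree_table_sets "set bp" "set bs" "set ap" "set as"
    by (rule swap)
  have nonempty: "set as \<noteq> {}" "set bs \<noteq> {}"
    using degree_table_card_set[OF dt] \<open>T > 0\<close> by auto
  have "K * L + K + L + 2 * T \<le> N_count (ap @ as) (bp @ bs) + min K (T * T) + 1"
    using card_sumset_lower_bound[OF nonempty] degree_table_card_set[OF dt]
    by (simp add: N_count_def)
  moreover have "K * L + K + L + 2 * T \<le> N_count (ap @ as) (bp @ bs) + min L (T * T) + 1"
    using swapped.card_sumset_lower_bound[OF nonempty(2,1)] degree_table_card_set[OF dt]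
    by (simp add: N_count_def sumset_commute[of "set bp \<union> set bs"] mult.commute)
  ultimately show ?thesis
    by (metis min_def)
qed

lemma min_square_le_mult_min:
  fixes K L T :: nat
  assumes "T > 0"
  shows "min (min K L) (T * T) \<le> T * min K (min L T)"
proof -
  have "K \<le> T * K" "L \<le> T * L" using assms by simp_all
  then show ?thesis by (auto simp: nat_mult_min_right min_le_iff_disj)
qed

lemma set_standard_secondary: "set (map (\<lambda>i. K * i) [0..<L] @ [K * L]) = (\<lambda>j. K * j) ` {0..L}"
  by (auto simp: atLeastAtMost_upt)

lemma degree_table_standard:
  assumes "K > 0" "L > 0"
  shows "degree_table K L 1 [0..<K] [K * L] (map (\<lambda>i. K * i) [0..<L]) [K * L]"
proof -
  have digits_unique: "x = i \<and> j' = j" if "x < K" "i < K" "x + K * j' = i + K * j" for x i j j'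
  proof -
    have "(x + K * j') mod K = (i + K * j) mod K" "(x + K * j') div K = (i + K * j) div K"
      using that(3) by simp_all
    then show ?thesis using that(1,2) by simp
  qed
  have "\<exists>!ij. ij \<in> set ([0..<K] @ [K * L]) \<times> set (map (\<lambda>i. K * i) [0..<L] @ [K * L])
      \<and> fst ij + snd ij = n"
    if n_in: "n \<in> sumset (set [0..<K]) (set (map (\<lambda>i. K * i) [0..<L]))" for n
  proof -
    obtain i j where ij: "i < K" "j < L" "n = i + K * j"
      using n_in unfolding sumset_def by auto
    have "n < K * L"
      using ij mult_le_mono2[of "Suc j" L K] by simp
    have unique: "x = i \<and> y = K * j"
      if x: "x \<in> insert (K * L) {0..<K}" and y: "y \<in> (\<lambda>j. K * j) ` {0..L}"
        and xy: "x + y = n" for x y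
    proof -
      obtain j' where "y = K * j'" using y by blast
      moreover have "x < K" using x xy \<open>n < K * L\<close> by auto
      ultimately show ?thesis using digits_unique ij xy by blast
    qed
    show ?thesis
      unfolding set_standard_secondary
    proof (rule ex1I[of _ "(i, K * j)"])
      fix ij' assume "ij' \<in> set ([0..<K] @ [K * L]) \<times> (\<lambda>j. K * j) ` {0..L} \<and> fst ij' + snd ij' = n"
      then show "ij' = (i, K * j)"
        using unique[of "fst ij'" "snd ij'"] by (auto simp: prod_eq_iff mem_Times_iff)
    qed (use ij in auto)
  qed
  then show ?thesis
    using assms by (auto simp: degree_table_def distinct_map inj_on_def)
qed

lemma N_count_standard_le:
  assumes "K > 0"
  shows "N_count ([0..<K] @ [K * L]) (map (\<lambda>i. K * i) [0..<L] @ [K * L]) \<le> K * L + K + L"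
proof -
  let ?S = "sumset (set ([0..<K] @ [K * L])) (set (map (\<lambda>i. K * i) [0..<L] @ [K * L]))"
  let ?U = "{0..<K * L + K} \<union> (\<lambda>j. K * L + K * j) ` {1..L}"
  have "x + K * j \<in> ?U"
    if "x < K \<or> x = K * L" "j \<le> L" for x j
  proof (cases "x < K")
    case True
    then have "x + K * j < K + K * L" using that(2) by (simp add: add_less_le_mono)
    then show ?thesis by simp
  next
    case False
    then show ?thesis using that assms by (cases "j = 0") auto
  qed
  then have "?S \<subseteq> ?U"
    unfolding set_standard_secondary sumset_def by fastforce
  then have "card ?S \<le> card ?U"
    by (intro card_mono) auto
  also have "\<dots> \<le> card {0..<K * L + K} + card ((\<lambda>j. K * L + K * j) ` {1..L})"
    by (rule card_Un_le)
  also have "\<dots> \<le> (K * L + K) + L"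
    using card_image_le[of "{1..L}" "\<lambda>j. K * L + K * j"] by simp
  finally show ?thesis unfolding N_count_def .
qed

theorem theorem5:
  fixes K L T :: nat
  assumes "K > 0" and "L > 0" and "T > 0"
  shows "(\<forall>ap as bp bs. degree_table K L T ap as bp bs \<longrightarrow>
            int (K * L + K + L + 2 * T) - 1 - int (T * min K (min L T))
              \<le> int (N_count (ap @ as) (bp @ bs)))
       \<and> degree_table K L 1 [0..<K] [K * L] (map (\<lambda>i. K * i) [0..<L]) [K * L]
       \<and> (\<forall>ap as bp bs. degree_table K L 1 ap as bp bs \<longrightarrow>
            N_count ([0..<K] @ [K * L]) (map (\<lambda>i. K * i) [0..<L] @ [K * L])
              \<le> N_count (ap @ as) (bp @ bs))"
proof (intro conjI allI impI)
  fix ap as bp bs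
  assume "degree_table K L T ap as bp bs"
  then have "K * L + K + L + 2 * T \<le> N_count (ap @ as) (bp @ bs) + min (min K L) (T * T) + 1"
    using \<open>T > 0\<close> by (rule N_count_degree_table_ge)
  moreover have "min (min K L) (T * T) \<le> T * min K (min L T)"
    using \<open>T > 0\<close> by (rule min_square_le_mult_min)
  ultimately show "int (K * L + K + L + 2 * T) - 1 - int (T * min K (min L T))
      \<le> int (N_count (ap @ as) (bp @ bs))"
    by linarith
next
  show "degree_table K L 1 [0..<K] [K * L] (map (\<lambda>i. K * i) [0..<L]) [K * L]"
    using assms(1,2) by (rule degree_table_standard)
next
  fix ap as bp bs
  assume "degree_table K L 1 ap as bp bs"
  then have "K * L + K + L \<le> N_count (ap @ as) (bp @ bs)"
    using N_count_degree_table_ge[of K L 1] assms by simp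
  then show "N_count ([0..<K] @ [K * L]) (map (\<lambda>i. K * i) [0..<L] @ [K * L])
      \<le> N_count (ap @ as) (bp @ bs)"
    using N_count_standard_le[OF \<open>K > 0\<close>] by (rule order_trans[rotated])
qed

end
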